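(* Let $p$ be a prime with $p\equiv\pm1\pmod 8$, let $\mathcal{D}_i,\mathcal{E}_i$ ($i=1,2$) be the quadratic residue codes of length $p$ over $R$ defined below, let $G_i$ be a generator matrix of $\mathcal{E}_i$, and let $\widehat{\mathcal{D}}_i,\widetilde{\mathcal{D}}_i$ be the extended codes of length $p+1$ defined below. Then: (i) if $p\equiv-1\pmod 8$, then $\widehat{\mathcal{D}}_i$ and $\widetilde{\mathcal{D}}_i$ are Euclidean self-dual for $i=1,2$; (ii) if $p\equiv1\pmod 8$, then $\widehat{\mathcal{D}}_1^\perp=\widetilde{\mathcal{D}}_2$ and $\widehat{\mathcal{D}}_2^\perp=\widetilde{\mathcal{D}}_1$.
   Context: $R=\mathbb{Z}_4[v]/(v^2-v)$, $R_p=R[X]/(X^p-1)$, vectors of $R^p$ identified with elements of $R_p$; $(f)$ denotes the ideal (cyclic code) generated by $f$. $\mathcal{Q}_p$ = nonzero quadratic residues mod $p$, $\mathcal{N}_p$ = quadratic non-residues; $Q(X)=\sum_{i\in\mathcal{Q}_p}X^i$, $N(X)=\sum_{i\in\mathcal{N}_p}X^i$. Case I ($p\equiv-1\pmod 8$, $p+1=8r$): if $r$ odd, $\mathcal{D}_1=(v(Q+2N)+(1-v)(N+2Q))$, $\mathcal{D}_2=(v(N+2Q)+(1-v)(Q+2N))$, $\mathcal{E}_1=(v(1-N+2Q)+(1-v)(1-Q+2N))$, $\mathcal{E}_2=(v(1-Q+2N)+(1-v)(1-N+2Q))$; if $r$ even, $\mathcal{D}_1=(-vQ-(1-v)N)$,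 $\mathcal{D}_2=(-vN-(1-v)Q)$, $\mathcal{E}_1=(v(1+N)+(1-v)(1+Q))$, $\mathcal{E}_2=(v(1+Q)+(1-v)(1+N))$. Case II ($p\equiv1\pmod 8$, $p-1=8r$): if $r$ odd, $\mathcal{D}_1=(v(1-N+2Q)+(1-v)(1-Q+2N))$, $\mathcal{D}_2=(v(1-Q+2N)+(1-v)(1-N+2Q))$, $\mathcal{E}_1=(v(Q+2N)+(1-v)(N+2Q))$, $\mathcal{E}_2=(v(N+2Q)+(1-v)(Q+2N))$; if $r$ even, $\mathcal{D}_1=(v(1+N)+(1-v)(1+Q))$, $\mathcal{D}_2=(v(1+Q)+(1-v)(1+N))$, $\mathcal{E}_1=(-vQ-(1-v)N)$, $\mathcal{E}_2=(-vN-(1-v)Q)$. A generator matrix $G_i$ of $\mathcal{E}_i$ is a matrix over $R$ whose rows generate $\mathcal{E}_i$ as an $R$-module. The extended codes: $\widehat{\mathcal{D}}_i$ (resp. $\widetilde{\mathcal{D}}_i$) is the $R$-linear code of length $p+1$ generated by the rows of the matrix whose first row is $(x,y,\dots,y)$ and whose remaining rows are $(0\mid \mathbf{g})$ for the rows $\mathbf{g}$ of $G_i$, where for $p\equiv-1\pmod 8$: $(x,y)=(3,3)$ for $\widehat{\mathcal{D}}_i$ and $(x,y)=(1,3)$ for $\widetilde{\mathcal{D}}_i$; for $p\equiv1\pmod 8$: $(x,y)=(3,1)$ for $\widehat{\mathcal{D}}_i$ and $(x,y)=(1,1)$ for $\widetilde{\mathcal{D}}_i$. Euclidean dual $\mathcal{C}^\perp=\{\mathbf{x}:\sum_ix_ic_i=0\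 \forall\mathbf{c}\in\mathcal{C}\}$; self-dual means $\mathcal{C}=\mathcal{C}^\perp$. *)

theory Defs
  imports Main "HOL-Library.Numeral_Type" "HOL-Number_Theory.Number_Theory"
begin

text \<open>RR a b represents a + b v with a, b in Z_4 (the type 4); v^2 = v.\<close>
datatype R = RR "4" "4"

instantiation R :: comm_ring_1
begin
fun plus_R where "plus_R (RR a b) (RR c d) = RR (a + c) (b + d)"
fun minus_R where "minus_R (RR a b) (RR c d) = RR (a - c) (b - d)"
fun uminus_R where "uminus_R (RR a b) = RR (- a) (- b)"
fun times_R where "times_R (RR a b) (RR c d) = RR (a * c) (a * d + b * c + b * d)"
definition zero_R where "zero_R = RR 0 0"
definition one_R where "one_R = RR 1 0"
instance
proof
  fix x y z :: R
  show "x * y * z = x * (y * z)"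
    by (cases x; cases y; cases z) (simp add: algebra_simps)
  show "x * y = y * x" by (cases x; cases y) (simp add: algebra_simps)
  show "1 * x = x" by (cases x) (simp add: one_R_def)
  show "x + y + z = x + (y + z)" by (cases x; cases y; cases z) (simp add: algebra_simps)
  show "x + y = y + x" by (cases x; cases y) (simp add: algebra_simps)
  show "0 + x = x" by (cases x) (simp add: zero_R_def)
  show "- x + x = 0" by (cases x) (simp add: zero_R_def)
  show "x - y = x + - y" by (cases x; cases y) simp
  show "(x + y) * z = x * z + y * z" by (cases x; cases y; cases z) (simp add: algebra_simps)
  show "(0::R) \<noteq> 1" by (simp add: zero_R_def one_R_def)
qed
end

definition vR :: R where "vR = RR 0 1"

text \<open>A vector of R^n is a function nat => R vanishing outside {0..<n}.\<close>
definition vecs :: "nat \<Rightarrow> (nat \<Rightarrow> R) set" where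
  "vecs n = {x. \<forall>i\<ge>n. x i = 0}"

definition rspan :: "(nat \<Rightarrow> R) set \<Rightarrow> (nat \<Rightarrow> R) set" where
  "rspan S = {(\<lambda>i. \<Sum>j<k. c j * w j i) | (k::nat) c w. \<forall>j<k. w j \<in> S}"

definition edual :: "nat \<Rightarrow> (nat \<Rightarrow> R) set \<Rightarrow> (nat \<Rightarrow> R) set" where
  "edual n C = {x \<in> vecs n. \<forall>c\<in>C. (\<Sum>i<n. x i * c i) = 0}"

definition self_dual :: "nat \<Rightarrow> (nat \<Rightarrow> R) set \<Rightarrow> bool" where
  "self_dual n C \<longleftrightarrow> C = edual n C"

text \<open>Multiplication in R_p on coefficient vectors (cyclic convolution).\<close>
definition cmul :: "nat \<Rightarrow> (nat \<Rightarrow> R) \<Rightarrow> (nat \<Rightarrow> R) \<Rightarrow> (nat \<Rightarrow> R)" where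
  "cmul p f g = (\<lambda>i. if i < p then (\<Sum>j<p. \<Sum>k<p. if (j + k) mod p = i then f j * g k else 0) else 0)"

definition cideal :: "nat \<Rightarrow> (nat \<Rightarrow> R) \<Rightarrow> (nat \<Rightarrow> R) set" where
  "cideal p f = {cmul p g f | g. g \<in> vecs p}"

definition QRset :: "nat \<Rightarrow> nat set" where
  "QRset p = {i. 0 < i \<and> i < p \<and> QuadRes (int p) (int i)}"

definition QNRset :: "nat \<Rightarrow> nat set" where
  "QNRset p = {i. 0 < i \<and> i < p \<and> \<not> QuadRes (int p) (int i)}"

definition Qpol :: "nat \<Rightarrow> nat \<Rightarrow> R" where
  "Qpol p i = (if i \<in> QRset p then 1 else 0)"

definition Npol :: "nat \<Rightarrow> nat \<Rightarrow> R" where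
  "Npol p i = (if i \<in> QNRset p then 1 else 0)"

definition onepol :: "nat \<Rightarrow> R" where
  "onepol i = (if i = 0 then 1 else 0)"

definition vcomb :: "(nat \<Rightarrow> R) \<Rightarrow> (nat \<Rightarrow> R) \<Rightarrow> (nat \<Rightarrow> R)" where
  "vcomb a b = (\<lambda>i. vR * a i + (1 - vR) * b i)"

definition qr_r :: "nat \<Rightarrow> nat" where
  "qr_r p = (if p mod 8 = 7 then (p + 1) div 8 else (p - 1) div 8)"

definition Dgen :: "nat \<Rightarrow> nat \<Rightarrow> (nat \<Rightarrow> R)" where
  "Dgen p i = (let Q = Qpol p; N = Npol p;
      QN = (\<lambda>j. Q j + 2 * N j); NQ = (\<lambda>j. N j + 2 * Q j);
      A = (\<lambda>j. onepol j - N j + 2 * Q j); B = (\<lambda>j. onepol j - Q j + 2 * N j);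
      N1 = (\<lambda>j. onepol j + N j); Q1 = (\<lambda>j. onepol j + Q j);
      mQ = (\<lambda>j. - Q j); mN = (\<lambda>j. - N j) in
    if p mod 8 = 7 then
      (if odd (qr_r p) then (if i = 1 then vcomb QN NQ else vcomb NQ QN)
       else (if i = 1 then vcomb mQ mN else vcomb mN mQ))
    else
      (if odd (qr_r p) then (if i = 1 then vcomb A B else vcomb B A)
       else (if i = 1 then vcomb N1 Q1 else vcomb Q1 N1)))"

definition Egen :: "nat \<Rightarrow> nat \<Rightarrow> (nat \<Rightarrow> R)" where
  "Egen p i = (let Q = Qpol p; N = Npol p;
      QN = (\<lambda>j. Q j + 2 * N j); NQ = (\<lambda>j. N j + 2 * Q j);
      A = (\<lambda>j. onepol j - N j + 2 * Q j); B = (\<lambda>j. onepol j - Q j + 2 * N j);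
      N1 = (\<lambda>j. onepol j + N j); Q1 = (\<lambda>j. onepol j + Q j);
      mQ = (\<lambda>j. - Q j); mN = (\<lambda>j. - N j) in
    if p mod 8 = 7 then
      (if odd (qr_r p) then (if i = 1 then vcomb A B else vcomb B A)
       else (if i = 1 then vcomb N1 Q1 else vcomb Q1 N1))
    else
      (if odd (qr_r p) then (if i = 1 then vcomb QN NQ else vcomb NQ QN)
       else (if i = 1 then vcomb mQ mN else vcomb mN mQ)))"

definition Dcode :: "nat \<Rightarrow> nat \<Rightarrow> (nat \<Rightarrow> R) set" where
  "Dcode p i = cideal p (Dgen p i)"

definition Ecode :: "nat \<Rightarrow> nat \<Rightarrow> (nat \<Rightarrow> R) set" where
  "Ecode p i = cideal p (Egen p i)"

definition ext_code :: "nat \<Rightarrow> R \<Rightarrow> R \<Rightarrow> (nat \<Rightarrow> R) list \<Rightarrow> (nat \<Rightarrow> R) set" where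
  "ext_code p x y G = rspan
     (insert (\<lambda>j. if j = 0 then x else if j \<le> p then y else 0)
        ((\<lambda>g j. if 0 < j \<and> j \<le> p then g (j - 1) else 0) ` set G))"

definition hatD :: "nat \<Rightarrow> (nat \<Rightarrow> R) list \<Rightarrow> (nat \<Rightarrow> R) set" where
  "hatD p G = (if p mod 8 = 7 then ext_code p 3 3 G else ext_code p 3 1 G)"

definition tildeD :: "nat \<Rightarrow> (nat \<Rightarrow> R) list \<Rightarrow> (nat \<Rightarrow> R) set" where
  "tildeD p G = (if p mod 8 = 7 then ext_code p 1 3 G else ext_code p 1 1 G)"

end

theory Submission
  imports Defs
begin

text \<open>
  Every generator of E_i is an R-linear combination of the
  polynomials 1, Q and N.  In R_p these span a subalgebra whose multiplication table is
  governed by the cyclotomic numbers of order two, i.e. the numbers of pairs of quadratic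
  (non-)residues with prescribed difference.  Elementary counting (row sums, symmetry,
  scaling by residues and non-residues) determines these numbers, so products, reflections
  and coefficient sums of such polynomials are known in closed form.

  An extended code of the stated shape is the set of words c (x, y, ..., y) + (0 | g f) with
  f the generator of E_i.  A duality criterion (edual_ext_ideal) identifies the Euclidean
  dual of such a code with the analogous code for f' and border (x', y') whenever f' is
  idempotent, f and f' have coefficient sum zero, the reflection X to X^-1 maps f to
  1 - f' - p J, and x, y, x', y' satisfy four identities.
\<close>

definition modp :: "nat \<Rightarrow> int \<Rightarrow> nat" where
  "modp p z = nat (z mod int p)"

lemma modp_lt: "0 < p \<Longrightarrow> modp p z < p"
  unfolding modp_def by (simp add: nat_less_iff)

lemma int_modp: "0 < p \<Longrightarrow> int (modp p z) = z mod int p"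
  unfolding modp_def by simp

lemma modp_eq_iff: "0 < p \<Longrightarrow> modp p z = modp p w \<longleftrightarrow> z mod int p = w mod int p"
  by (metis int_modp of_nat_eq_iff)

lemma modp_of_lt: "j < p \<Longrightarrow> modp p (int j) = j"
  unfolding modp_def by simp

lemma modp_cong: "[z = w] (mod int p) \<Longrightarrow> modp p z = modp p w"
  unfolding modp_def cong_def by simp

lemma modp_cong_self: "0 < p \<Longrightarrow> [int (modp p z) = z] (mod int p)"
  by (simp add: int_modp cong_def)

lemma modp_eq_0_iff: "0 < p \<Longrightarrow> modp p z = 0 \<longleftrightarrow> int p dvd z"
proof -
  assume "0 < p"
  hence "0 \<le> z mod int p" by simp
  thus ?thesis unfolding modp_def by (auto simp: dvd_eq_mod_eq_0)
qed

text \<open>Affine maps j \<mapsto> a j + b with a a unit permute the residues modulo a prime; this is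
  the basic reindexing tool for all sums and counts below.\<close>
lemma affine_inj:
  assumes p: "prime p" and cop: "coprime a (int p)"
  shows "inj_on (\<lambda>j. modp p (a * int j + b)) {..<p}"
proof (rule inj_onI)
  fix j j' assume j: "j \<in> {..<p}" and j': "j' \<in> {..<p}"
    and eq: "modp p (a * int j + b) = modp p (a * int j' + b)"
  have "(a * int j + b) mod int p = (a * int j' + b) mod int p"
    using eq modp_eq_iff prime_gt_0_nat[OF p] by blast
  hence "[a * int j + b = a * int j' + b] (mod int p)" by (simp add: cong_def)
  hence "[a * int j = a * int j'] (mod int p)" by (simp only: cong_add_rcancel)
  hence "[int j = int j'] (mod int p)" using cong_mult_lcancel[OF cop] by simp
  thus "j = j'" using j j' by (simp add: cong_def)
qed

lemma affine_bij:
  assumes p: "prime p" and cop: "coprime a (int p)"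
  shows "bij_betw (\<lambda>j. modp p (a * int j + b)) {..<p} {..<p}"
proof -
  have p0: "0 < p" using p prime_gt_0_nat by blast
  have "(\<lambda>j. modp p (a * int j + b)) ` {..<p} = {..<p}"
    by (rule endo_inj_surj) (use affine_inj[OF p cop] modp_lt[OF p0] in \<open>auto simp del: of_nat_less_iff\<close>)
  thus ?thesis using affine_inj[OF p cop] by (simp add: bij_betw_def)
qed

lemma affine_sum:
  assumes p: "prime p" and cop: "coprime a (int p)"
  shows "(\<Sum>j<p. F (modp p (a * int j + b))) = (\<Sum>j<p. F j)"
  using sum.reindex_bij_betw[OF affine_bij[OF p cop, of b], of F] by simp

lemma affine_card:
  assumes p: "prime p" and cop: "coprime a (int p)"
  shows "card {j\<in>{..<p}. P (modp p (a * int j + b))} = card {j\<in>{..<p}. P j}"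
proof -
  let ?h = "\<lambda>j. modp p (a * int j + b)"
  have "?h ` {j\<in>{..<p}. P (?h j)} = {j\<in>{..<p}. P j}"
    using affine_bij[OF p cop, of b] unfolding bij_betw_def by auto
  moreover have "inj_on ?h {j\<in>{..<p}. P (?h j)}"
    using affine_inj[OF p cop, of b] by (rule inj_on_subset) auto
  ultimately show ?thesis using card_image by fastforce
qed

section \<open>Quadratic residues\<close>

lemma QuadRes_mod: "QuadRes m a = QuadRes m (a mod m)"
  unfolding QuadRes_def cong_def by simp

lemma cong_one_minus_one:
  assumes "2 < p" shows "\<not> [1 = -1] (mod int p)"
proof
  assume "[1 = -1] (mod int p)"
  hence "int p dvd 2" by (simp add: cong_iff_dvd_diff)
  thus False using assms by (simp add: zdvd_not_zless)
qed

text \<open>Multiplicativity of the quadratic character, from Euler's criterion.\<close>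
lemma QuadRes_mult:
  assumes p: "prime p" "2 < p" and a: "\<not> int p dvd a" and b: "\<not> int p dvd b"
  shows "QuadRes (int p) (a * b) \<longleftrightarrow> (QuadRes (int p) a \<longleftrightarrow> QuadRes (int p) b)"
proof -
  let ?k = "(p - 1) div 2"
  have ab: "\<not> int p dvd a * b" using a b p(1) by (simp add: prime_dvd_mult_iff)
  have "[Legendre a (int p) * Legendre b (int p) = a ^ ?k * b ^ ?k] (mod int p)"
    using euler_criterion[OF p, of a] euler_criterion[OF p, of b] by (rule cong_mult)
  hence "[Legendre (a*b) (int p) = Legendre a (int p) * Legendre b (int p)] (mod int p)"
    using euler_criterion[OF p, of "a*b"] by (metis cong_sym cong_trans power_mult_distrib)
  moreover have "\<not> [a = 0] (mod int p)" "\<not> [b = 0] (mod int p)" "\<not> [a*b = 0] (mod int p)"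
    using a b ab by (simp_all add: cong_0_iff)
  moreover have "\<not> [-1 = 1] (mod int p)" using cong_one_minus_one[OF p(2)] cong_sym by blast
  ultimately show ?thesis using cong_one_minus_one[OF p(2)] unfolding Legendre_def
    by (auto split: if_splits)
qed

lemma QuadRes_minus_one:
  assumes p: "prime p" "2 < p"
  shows "QuadRes (int p) (-1) \<longleftrightarrow> p mod 4 = 1"
proof -
  let ?k = "(p - 1) div 2"
  have e: "[Legendre (-1) (int p) = (-1) ^ ?k] (mod int p)" using euler_criterion[OF p] by simp
  have n0: "\<not> [-1 = 0] (mod int p)" using p by (simp add: cong_0_iff)
  have ne: "\<not> [-1 = 1] (mod int p)" using cong_one_minus_one[OF p(2)] cong_sym by blast
  have "odd p" using p prime_odd_nat by blast
  hence "p mod 4 = 1 \<or> p mod 4 = 3" by presburger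
  moreover have "(-1::int) ^ ?k = (if p mod 4 = 1 then 1 else -1)" if "p mod 4 = 1 \<or> p mod 4 = 3"
  proof -
    have "even ?k \<longleftrightarrow> p mod 4 = 1" using that by presburger
    thus ?thesis by simp
  qed
  ultimately show ?thesis using e n0 ne cong_one_minus_one[OF p(2)] unfolding Legendre_def
    by (auto split: if_splits)
qed

definition qclass :: "nat \<Rightarrow> bool \<Rightarrow> nat set" where
  "qclass p b = (if b then QRset p else QNRset p)"

lemma modp_qclass:
  assumes "0 < p"
  shows "modp p z \<in> qclass p b \<longleftrightarrow> (\<not> int p dvd z \<and> QuadRes (int p) z = b)"
proof -
  have "QuadRes (int p) (int (modp p z)) = QuadRes (int p) z"
    using int_modp[OF assms] QuadRes_mod by metis
  moreover have "0 < modp p z \<longleftrightarrow> \<not> int p dvd z" using modp_eq_0_iff[OF assms, of z] by linarith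
  ultimately show ?thesis using modp_lt[OF assms, of z]
    unfolding qclass_def QRset_def QNRset_def by auto
qed

lemma nat_qclass:
  assumes "0 < p" "j < p"
  shows "j \<in> qclass p b \<longleftrightarrow> (\<not> int p dvd int j \<and> QuadRes (int p) (int j) = b)"
  using modp_qclass[OF assms(1), of "int j" b] modp_of_lt[OF assms(2)] by simp

lemma qclass_range: "j \<in> qclass p b \<Longrightarrow> 0 < j \<and> j < p"
  unfolding qclass_def QRset_def QNRset_def by (auto split: if_splits)

lemma qclass_sub: "qclass p b \<subseteq> {..<p}"
  using qclass_range by blast

lemma qclass_finite: "finite (qclass p b)"
  using qclass_sub finite_subset by blast

locale odd_prime =
  fixes p :: nat
  assumes prime: "prime p" and gt2: "2 < p"
begin

lemma p0: "0 < p" using gt2 by simp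

text \<open>The number of quadratic residues (and of non-residues).\<close>
abbreviation nres where "nres \<equiv> (p - 1) div 2"

lemma p_odd: "odd p" using prime gt2 prime_odd_nat by blast

lemma p_eq: "p = 2 * nres + 1" using p_odd by presburger

lemma nres_pos: "0 < nres" using gt2 p_eq by linarith

lemma not_dvd_lt: "0 < c \<Longrightarrow> c < p \<Longrightarrow> \<not> int p dvd int c"
  using nat_dvd_not_less by simp

lemma coprime_lt: "0 < c \<Longrightarrow> c < p \<Longrightarrow> coprime (int c) (int p)"
proof -
  assume "0 < c" "c < p"
  hence "coprime p c" using prime_imp_coprime[OF prime] nat_dvd_not_less by blast
  thus ?thesis by (simp add: coprime_commute)
qed

lemma not_dvd_minus_one: "\<not> int p dvd (-1)"
proof
  assume "int p dvd -1"
  hence "int p dvd int 1" by simp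
  hence "p dvd 1" by (simp only: of_nat_dvd_iff)
  thus False using gt2 by simp
qed

lemma qclass_disj: "qclass p True \<inter> qclass p False = {}"
  unfolding qclass_def QRset_def QNRset_def by auto

lemma qclass_partition: "{..<p} = insert 0 (qclass p True \<union> qclass p False)"
  using p0 unfolding qclass_def QRset_def QNRset_def by auto

lemma residue_cases:
  assumes "i < p"
  obtains "i = 0" | "i \<in> qclass p True" | "i \<in> qclass p False"
proof -
  have "i \<in> insert 0 (qclass p True \<union> qclass p False)" using assms qclass_partition by blast
  thus ?thesis using that by blast
qed

lemma modp_mult_qclass:
  assumes "\<not> int p dvd a" "\<not> int p dvd b"
  shows "modp p (a * b) \<in> qclass p c \<longleftrightarrow> (QuadRes (int p) a = QuadRes (int p) b) = c"
proof -
  have "\<not> int p dvd a * b" using assms prime by (simp add: prime_dvd_mult_iff)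
  thus ?thesis using modp_qclass[OF p0, of "a*b" c] QuadRes_mult[OF prime gt2 assms] by auto
qed

lemma card_qclasses: "card (qclass p True) + card (qclass p False) = p - 1"
proof -
  have "card {..<p} = card (insert 0 (qclass p True \<union> qclass p False))"
    using qclass_partition by simp
  also have "\<dots> = Suc (card (qclass p True \<union> qclass p False))"
    using qclass_range qclass_finite by (subst card_insert_disjoint) auto
  also have "card (qclass p True \<union> qclass p False) = card (qclass p True) + card (qclass p False)"
    using qclass_disj qclass_finite by (simp add: card_Un_disjoint)
  finally show ?thesis by simp
qed

lemma QR_small_square:
  assumes i: "i \<in> qclass p True"
  shows "i \<in> (\<lambda>x. modp p (int x * int x)) ` {1..nres}"
proof -
  have ip: "0 < i" "i < p" using qclass_range[OF i] by auto
  have "QuadRes (int p) (int i)" using i nat_qclass[OF p0 ip(2)] by simp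
  then obtain y where y: "[y^2 = int i] (mod int p)" unfolding QuadRes_def by blast
  define y' where "y' = y mod int p"
  have y'r: "0 \<le> y'" "y' < int p" using p0 unfolding y'_def by auto
  have "[y' = y] (mod int p)" unfolding y'_def cong_def by simp
  hence y2: "[y'*y' = int i] (mod int p)" using y by (metis cong_mult cong_trans power2_eq_square)
  have "y' \<noteq> 0"
  proof
    assume "y' = 0"
    hence "[0 = int i] (mod int p)" using y2 by simp
    hence "int p dvd int i" by (metis cong_0_iff cong_sym)
    thus False using not_dvd_lt[OF ip] by simp
  qed
  show ?thesis
  proof (cases "y' \<le> int nres")
    case True
    have "modp p (int (nat y') * int (nat y')) = modp p (int i)"
      using y2 y'r by (intro modp_cong) simp
    moreover have "nat y' \<in> {1..nres}" using True \<open>y' \<noteq> 0\<close> y'r by auto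
    ultimately show ?thesis using modp_of_lt[OF ip(2)] by force
  next
    case False
    define x where "x = p - nat y'"
    have "int x = int p - y'" using y'r unfolding x_def by simp
    hence "int x - (- y') = int p" by simp
    hence "[int x = - y'] (mod int p)" unfolding cong_iff_dvd_diff by simp
    hence "[int x * int x = (- y') * (- y')] (mod int p)" using cong_mult by blast
    hence "[int x * int x = int i] (mod int p)" using y2 by (simp add: cong_trans)
    hence "modp p (int x * int x) = modp p (int i)" by (rule modp_cong)
    moreover have "x \<in> {1..nres}" using False y'r p_eq unfolding x_def by auto
    ultimately show ?thesis using modp_of_lt[OF ip(2)] by force
  qed
qed

lemma card_QR_le: "card (qclass p True) \<le> nres"
proof -
  have "card (qclass p True) \<le> card ((\<lambda>x. modp p (int x * int x)) ` {1..nres})"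
    using QR_small_square by (intro card_mono) auto
  also have "\<dots> \<le> card {1..nres}" by (rule card_image_le) simp
  finally show ?thesis by simp
qed

text \<open>Multiplication by a fixed non-residue exchanges the two classes, so they have the same
  size; a non-residue exists by the previous bound.\<close>
lemma card_qclass_eq: "card (qclass p True) = card (qclass p False)"
proof -
  have "card (qclass p False) > 0" using card_qclasses card_QR_le p_eq nres_pos by linarith
  then obtain t where t: "t \<in> qclass p False" by (metis card.empty ex_in_conv less_irrefl)
  have tp: "0 < t" "t < p" using qclass_range[OF t] by auto
  have tq: "\<not> QuadRes (int p) (int t)" using t nat_qclass[OF p0 tp(2)] by simp
  have "modp p (int t * int j) \<in> qclass p False \<longleftrightarrow> j \<in> qclass p True" if "j < p" for j
  proof (cases "j = 0")
    case True
    hence "modp p (int t * int j) = 0" by (simp add: modp_def)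
    thus ?thesis using True qclass_range by (metis less_irrefl)
  next
    case False
    thus ?thesis using modp_mult_qclass[OF not_dvd_lt[OF tp]] not_dvd_lt[of j] tq
        nat_qclass[OF p0 that] that by auto
  qed
  hence "{j\<in>{..<p}. modp p (int t * int j + 0) \<in> qclass p False} = qclass p True"
    using qclass_sub by auto
  moreover have "{j\<in>{..<p}. j \<in> qclass p False} = qclass p False" using qclass_sub by auto
  ultimately show ?thesis using affine_card[OF prime coprime_lt[OF tp], of "\<lambda>j. j \<in> qclass p False" 0]
    by simp
qed

lemma card_qclass: "card (qclass p b) = nres"
  using card_qclass_eq card_qclasses p_eq by (cases b) auto

end

section \<open>Cyclotomic numbers of order two\<close>

text \<open>The number of j with j \<in> S and i - j \<in> T modulo p.  For S, T the two quadratic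
  classes these are the cyclotomic numbers; they are the structure constants of the algebra
  spanned by 1, Q and N.\<close>
definition pair_count :: "nat \<Rightarrow> nat set \<Rightarrow> nat set \<Rightarrow> nat \<Rightarrow> nat" where
  "pair_count p S T i = card {j\<in>{..<p}. j \<in> S \<and> modp p (int i - int j) \<in> T}"

lemma card_filter_sum: "finite A \<Longrightarrow> card {x\<in>A. P x} = (\<Sum>x\<in>A. if P x then 1 else 0)"
  by (simp add: sum.If_cases Int_def conj_commute)

context odd_prime
begin

abbreviation minus_one_QR where "minus_one_QR \<equiv> QuadRes (int p) (-1)"

abbreviation cyc where "cyc b1 b2 \<equiv> pair_count p (qclass p b1) (qclass p b2) 1"

lemma one_QR: "1 \<in> qclass p True"
proof -
  have "QuadRes (int p) 1" unfolding QuadRes_def by (rule exI[of _ 1]) simp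
  thus ?thesis using gt2 unfolding qclass_def QRset_def by simp
qed

lemma modp_diff_eq_0_iff: "i < p \<Longrightarrow> j < p \<Longrightarrow> modp p (int i - int j) = 0 \<longleftrightarrow> j = i"
proof -
  assume i: "i < p" and j: "j < p"
  have "modp p (int i - int j) = 0 \<longleftrightarrow> int i mod int p = int j mod int p"
    using modp_eq_0_iff[OF p0] by (simp add: mod_eq_dvd_iff)
  also have "\<dots> \<longleftrightarrow> j = i" using i j by auto
  finally show ?thesis .
qed

text \<open>Multiplying everything by a unit c permutes the pairs; the classes are exchanged
  according to the quadratic character of c.\<close>
lemma pair_count_scale:
  assumes c: "0 < c" "c < p" and i: "i < p"
  shows "pair_count p (qclass p b1) (qclass p b2) (modp p (int c * int i)) =
         pair_count p (qclass p (QuadRes (int p) (int c) = b1)) (qclass p (QuadRes (int p) (int c) = b2)) i"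
proof -
  let ?q = "QuadRes (int p) (int c)"
  let ?P = "\<lambda>j. j \<in> qclass p b1 \<and> modp p (int (modp p (int c * int i)) - int j) \<in> qclass p b2"
  have scale: "modp p (int c * z) \<in> qclass p b \<longleftrightarrow> modp p z \<in> qclass p (?q = b)" for z b
  proof (cases "int p dvd z")
    case True
    thus ?thesis using modp_qclass[OF p0] by auto
  next
    case False
    thus ?thesis using modp_mult_qclass[OF not_dvd_lt[OF c] False] modp_qclass[OF p0] by auto
  qed
  have "?P (modp p (int c * int j)) \<longleftrightarrow> j \<in> qclass p (?q = b1) \<and> modp p (int i - int j) \<in> qclass p (?q = b2)"
    if j: "j < p" for j
  proof -
    have "modp p (int (modp p (int c * int i)) - int (modp p (int c * int j))) = modp p (int c * (int i - int j))"
      using cong_diff[OF modp_cong_self[OF p0] modp_cong_self[OF p0]]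
      by (intro modp_cong) (simp add: right_diff_distrib)
    thus ?thesis using scale[of "int j" b1] scale[of "int i - int j" b2] modp_of_lt[OF j] by simp
  qed
  hence "{j\<in>{..<p}. ?P (modp p (int c * int j + 0))} =
      {j\<in>{..<p}. j \<in> qclass p (?q = b1) \<and> modp p (int i - int j) \<in> qclass p (?q = b2)}"
    by auto
  moreover have "card {j\<in>{..<p}. ?P (modp p (int c * int j + 0))} = card {j\<in>{..<p}. ?P j}"
    by (rule affine_card[OF prime coprime_lt[OF c]])
  ultimately show ?thesis unfolding pair_count_def by simp
qed

text \<open>Away from 0 the count depends only on the class of i, hence on a cyclotomic number.\<close>
lemma pair_count_nonzero:
  assumes "i \<in> qclass p b"
  shows "pair_count p (qclass p b1) (qclass p b2) i = cyc (b = b1) (b = b2)"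
proof -
  have i: "0 < i" "i < p" using qclass_range[OF assms] by auto
  have "QuadRes (int p) (int i) = b" using assms nat_qclass[OF p0 i(2)] by simp
  moreover have "modp p (int i * int 1) = i" using modp_of_lt[OF i(2)] by simp
  moreover have "1 < p" using gt2 by simp
  ultimately show ?thesis using pair_count_scale[OF i(1) i(2) \<open>1 < p\<close>, of b1 b2] by simp
qed

lemma pair_count_zero:
  "pair_count p (qclass p b1) (qclass p b2) 0 = (if (minus_one_QR = b1) = b2 then nres else 0)"
proof -
  have "modp p (- 1 * int j) \<in> qclass p b2 \<longleftrightarrow> ((minus_one_QR = b1) = b2)" if "j \<in> qclass p b1" for j
  proof -
    have j: "0 < j" "j < p" using qclass_range[OF that] by auto
    thus ?thesis using modp_mult_qclass[OF not_dvd_minus_one not_dvd_lt[OF j]] nat_qclass[OF p0 j(2)] that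
      by auto
  qed
  hence "{j\<in>{..<p}. j \<in> qclass p b1 \<and> modp p (int 0 - int j) \<in> qclass p b2} =
      (if (minus_one_QR = b1) = b2 then qclass p b1 else {})"
    using qclass_sub by auto
  thus ?thesis unfolding pair_count_def using card_qclass by simp
qed

text \<open>The reflection j \<mapsto> i - j shows that the count is symmetric in S and T.\<close>
lemma pair_count_sym: "pair_count p S T i = pair_count p T S i"
proof -
  let ?P = "\<lambda>j. j \<in> T \<and> modp p (int i - int j) \<in> S"
  have reflect: "modp p (int i - int (modp p (int i - int j))) = j" if "j < p" for j
  proof -
    have "modp p (int i - int (modp p (int i - int j))) = modp p (int j)"
      using cong_diff[OF cong_refl[of "int i"] modp_cong_self[OF p0, of "int i - int j"]]
      by (intro modp_cong) simp
    thus ?thesis using modp_of_lt[OF that] by simp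
  qed
  have "card {j\<in>{..<p}. ?P (modp p (-1 * int j + int i))} = card {j\<in>{..<p}. ?P j}"
    by (rule affine_card[OF prime]) simp
  moreover have "{j\<in>{..<p}. ?P (modp p (-1 * int j + int i))} = {j\<in>{..<p}. j \<in> S \<and> modp p (int i - int j) \<in> T}"
    using reflect by auto
  ultimately show ?thesis unfolding pair_count_def by simp
qed

text \<open>Row sums: the partners i - j of the elements j of a class are split among 0 and the
  two classes.\<close>
lemma pair_count_row:
  assumes i: "i < p"
  shows "pair_count p (qclass p b) (qclass p True) i + pair_count p (qclass p b) (qclass p False) i
           + (if i \<in> qclass p b then 1 else 0) = nres"
proof -
  let ?S = "qclass p b"
  let ?C = "\<lambda>T. {j\<in>{..<p}. j \<in> ?S \<and> modp p (int i - int j) \<in> T}"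
  have split: "?S = ?C (qclass p True) \<union> ?C (qclass p False) \<union> ?C {0}"
    using modp_lt[OF p0] qclass_partition qclass_sub by blast
  have zero: "?C {0} = (if i \<in> ?S then {i} else {})"
    using modp_diff_eq_0_iff[OF i] i by auto
  have disjoint: "?C (qclass p True) \<inter> ?C (qclass p False) = {}"
      "(?C (qclass p True) \<union> ?C (qclass p False)) \<inter> ?C {0} = {}"
    using qclass_disj qclass_range[of 0 p] by auto
  have "card ?S = card (?C (qclass p True)) + card (?C (qclass p False)) + card (?C {0})"
    using disjoint by (subst split) (simp add: card_Un_disjoint)
  thus ?thesis using zero card_qclass unfolding pair_count_def by (simp split: if_splits)
qed

text \<open>Summing the (True, True) counts over all i counts all pairs of residues.\<close>
lemma pair_count_total: "(\<Sum>i<p. pair_count p (qclass p True) (qclass p True) i) = nres * nres"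
proof -
  let ?Q = "qclass p True"
  have inner: "(\<Sum>i<p. if modp p (int i - int j) \<in> ?Q then 1 else 0) = nres" for j
  proof -
    have "(\<Sum>i<p. if modp p (1 * int i + - int j) \<in> ?Q then 1 else 0) = (\<Sum>i<p. if i \<in> ?Q then (1::nat) else 0)"
      by (rule affine_sum[OF prime]) simp
    also have "\<dots> = card {i\<in>{..<p}. i \<in> ?Q}" using card_filter_sum[of "{..<p}" "\<lambda>i. i \<in> ?Q"] by simp
    also have "{i\<in>{..<p}. i \<in> ?Q} = ?Q" using qclass_sub by auto
    finally show ?thesis using card_qclass by simp
  qed
  have "(\<Sum>i<p. pair_count p ?Q ?Q i) = (\<Sum>i<p. \<Sum>j<p. if j \<in> ?Q \<and> modp p (int i - int j) \<in> ?Q then 1 else 0)"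
    unfolding pair_count_def by (intro sum.cong refl card_filter_sum) simp
  also have "\<dots> = (\<Sum>j<p. \<Sum>i<p. if j \<in> ?Q \<and> modp p (int i - int j) \<in> ?Q then 1 else 0)"
    by (rule sum.swap)
  also have "\<dots> = (\<Sum>j<p. if j \<in> ?Q then nres else 0)"
    using inner by (intro sum.cong) auto
  also have "\<dots> = (\<Sum>j\<in>?Q. nres)"
    using qclass_sub by (simp add: sum.If_cases Int_absorb1)
  finally show ?thesis using card_qclass by simp
qed

lemma cyc_row_QR: "cyc True True + cyc True False + 1 = nres"
  using pair_count_row[of 1 True] one_QR gt2 by simp

lemma cyc_row_QNR: "cyc False True + cyc False False = nres"
proof -
  have "1 \<notin> qclass p False" using one_QR qclass_disj by blast
  thus ?thesis using pair_count_row[of 1 False] gt2 by simp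
qed

lemma cyc_sym: "cyc False True = cyc True False"
  using pair_count_sym by simp

lemma cyc_total:
  "(if minus_one_QR then nres else 0) + nres * cyc True True + nres * cyc False False = nres * nres"
proof -
  let ?f = "pair_count p (qclass p True) (qclass p True)"
  have "(\<Sum>i<p. ?f i) = ?f 0 + (\<Sum>i\<in>qclass p True. ?f i) + (\<Sum>i\<in>qclass p False. ?f i)"
    using qclass_range qclass_finite qclass_disj
    by (subst qclass_partition) (subst sum.insert, auto simp: sum.union_disjoint)
  also have "(\<Sum>i\<in>qclass p True. ?f i) = nres * cyc True True"
    using pair_count_nonzero[of _ True True True] card_qclass[of True] by simp
  also have "(\<Sum>i\<in>qclass p False. ?f i) = nres * cyc False False"
    using pair_count_nonzero[of _ False True True] card_qclass[of False] by simp
  finally show ?thesis using pair_count_total pair_count_zero[of True True] by simp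
qed

lemma cyc_solution:
  "cyc True True + cyc True False + 1 = nres \<and> cyc True False + cyc False False = nres \<and>
   (if minus_one_QR then 2 * cyc True False = nres else 2 * cyc True False + 1 = nres)"
proof -
  have r2: "cyc True False + cyc False False = nres" using cyc_row_QNR cyc_sym by simp
  have "nres * (cyc True True + cyc False False + (if minus_one_QR then 1 else 0)) = nres * nres"
    using cyc_total by (cases minus_one_QR) (simp_all add: algebra_simps)
  hence "cyc True True + cyc False False + (if minus_one_QR then 1 else 0) = nres"
    using nres_pos by (metis mult_left_cancel not_gr0)
  thus ?thesis using cyc_row_QR r2 by (simp split: if_splits)
qed

lemma pair_count_formula:
  assumes "i < p"
  shows "pair_count p (qclass p b1) (qclass p b2) i =
    (if i = 0 then (if (minus_one_QR = b1) = b2 then nres else 0)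
     else if i \<in> qclass p True then cyc b1 b2 else cyc (\<not> b1) (\<not> b2))"
  using assms
proof (cases rule: residue_cases)
  case 1 thus ?thesis using pair_count_zero by simp
next
  case 2 thus ?thesis using pair_count_nonzero[OF 2, of b1 b2] qclass_range by auto
next
  case 3 thus ?thesis using pair_count_nonzero[OF 3, of b1 b2] qclass_disj qclass_range by auto
qed

end

section \<open>The subalgebra of R_p spanned by 1, Q and N\<close>

definition conv :: "nat \<Rightarrow> (nat \<Rightarrow> R) \<Rightarrow> (nat \<Rightarrow> R) \<Rightarrow> nat \<Rightarrow> R" where
  "conv p f g i = (\<Sum>j<p. f j * g (modp p (int i - int j)))"

definition qind :: "nat \<Rightarrow> bool \<Rightarrow> nat \<Rightarrow> R" where
  "qind p b i = (if i \<in> qclass p b then 1 else 0)"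

definition qpoly :: "nat \<Rightarrow> R \<Rightarrow> R \<Rightarrow> R \<Rightarrow> nat \<Rightarrow> R" where
  "qpoly p a b c i = a * onepol i + b * qind p True i + c * qind p False i"

lemma cmul_eq_conv:
  assumes p0: "0 < p" and i: "i < p"
  shows "cmul p f g i = conv p f g i"
proof -
  have "(\<Sum>k<p. if (j + k) mod p = i then f j * g k else 0) = f j * g (modp p (int i - int j))" for j
  proof -
    have "(j + k) mod p = i \<longleftrightarrow> k = modp p (int i - int j)" if k: "k < p" for k
    proof -
      have "(j + k) mod p = i \<longleftrightarrow> [int j + int k = int i] (mod int p)"
        using i by (metis cong_def cong_int_iff mod_less of_nat_add)
      also have "\<dots> \<longleftrightarrow> [int k = int i - int j] (mod int p)"
        by (metis add.commute cong_add_lcancel diff_add_cancel)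
      also have "\<dots> \<longleftrightarrow> k = modp p (int i - int j)"
        using modp_eq_iff[OF p0] modp_of_lt[OF k] by (metis cong_def)
      finally show ?thesis .
    qed
    hence "(\<Sum>k<p. if (j + k) mod p = i then f j * g k else 0) =
        (\<Sum>k<p. if k = modp p (int i - int j) then f j * g k else 0)"
      by (intro sum.cong) auto
    thus ?thesis using modp_lt[OF p0] by simp
  qed
  thus ?thesis unfolding cmul_def conv_def using i by simp
qed

lemma conv_linear_left:
  "conv p (\<lambda>j. a * f1 j + b * f2 j + c * f3 j) h i = a * conv p f1 h i + b * conv p f2 h i + c * conv p f3 h i"
  unfolding conv_def by (simp add: algebra_simps sum.distrib sum_distrib_left)

lemma conv_linear_right:
  "conv p h (\<lambda>j. a * f1 j + b * f2 j + c * f3 j) i = a * conv p h f1 i + b * conv p h f2 i + c * conv p h f3 i"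
  unfolding conv_def by (simp add: algebra_simps sum.distrib sum_distrib_left)

lemma Qpol_qind: "Qpol p = qind p True"
  unfolding Qpol_def qind_def qclass_def by auto

lemma Npol_qind: "Npol p = qind p False"
  unfolding Npol_def qind_def qclass_def by auto

lemma generators_qpoly:
  "(\<lambda>j. Qpol p j + 2 * Npol p j) = qpoly p 0 1 2"
  "(\<lambda>j. Npol p j + 2 * Qpol p j) = qpoly p 0 2 1"
  "(\<lambda>j. onepol j - Npol p j + 2 * Qpol p j) = qpoly p 1 2 (-1)"
  "(\<lambda>j. onepol j - Qpol p j + 2 * Npol p j) = qpoly p 1 (-1) 2"
  "(\<lambda>j. onepol j + Npol p j) = qpoly p 1 0 1"
  "(\<lambda>j. onepol j + Qpol p j) = qpoly p 1 1 0"
  "(\<lambda>j. - Qpol p j) = qpoly p 0 (-1) 0"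
  "(\<lambda>j. - Npol p j) = qpoly p 0 0 (-1)"
  unfolding qpoly_def Qpol_qind Npol_qind by (rule ext; simp add: algebra_simps)+

lemma vcomb_qpoly: "vcomb (qpoly p a b c) (qpoly p a' b' c') =
   qpoly p (vR*a + (1-vR)*a') (vR*b + (1-vR)*b') (vR*c + (1-vR)*c')"
  unfolding vcomb_def qpoly_def by (rule ext) (simp add: algebra_simps)

context odd_prime
begin

lemma qpoly_values:
  "qpoly p a b c 0 = a"
  "i \<in> qclass p True \<Longrightarrow> qpoly p a b c i = b"
  "i \<in> qclass p False \<Longrightarrow> qpoly p a b c i = c"
  "p \<le> i \<Longrightarrow> qpoly p a b c i = 0"
  using qclass_range qclass_disj p0 unfolding qpoly_def qind_def onepol_def by (auto, fastforce+)

lemma conv_one_left: "i < p \<Longrightarrow> conv p onepol g i = g i"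
proof -
  assume i: "i < p"
  have "conv p onepol g i = (\<Sum>j<p. if j = 0 then g (modp p (int i - int j)) else 0)"
    unfolding conv_def onepol_def by (intro sum.cong) auto
  thus ?thesis using p0 modp_of_lt[OF i] by simp
qed

lemma conv_one_right: "i < p \<Longrightarrow> conv p f onepol i = f i"
proof -
  assume i: "i < p"
  have "conv p f onepol i = (\<Sum>j<p. if j = i then f j else 0)"
    unfolding conv_def onepol_def using modp_diff_eq_0_iff[OF i] by (intro sum.cong) auto
  thus ?thesis using i by simp
qed

lemma conv_qind: "i < p \<Longrightarrow> conv p (qind p b1) (qind p b2) i = of_nat (pair_count p (qclass p b1) (qclass p b2) i)"
proof -
  assume i: "i < p"
  let ?P = "\<lambda>j. j \<in> qclass p b1 \<and> modp p (int i - int j) \<in> qclass p b2"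
  have "conv p (qind p b1) (qind p b2) i = of_nat (\<Sum>j<p. if ?P j then (1::nat) else 0)"
    unfolding conv_def qind_def of_nat_sum by (intro sum.cong) auto
  thus ?thesis unfolding pair_count_def using card_filter_sum[of "{..<p}" ?P] by simp
qed

text \<open>The constant coefficients of Q^2 = N^2 and of Q N, and the cyclotomic numbers, read in R.\<close>
abbreviation "diag0 \<equiv> (of_nat (if minus_one_QR then nres else 0) :: R)"
abbreviation "offdiag0 \<equiv> (of_nat (if minus_one_QR then 0 else nres) :: R)"
abbreviation "cycR b1 b2 \<equiv> (of_nat (cyc b1 b2) :: R)"

lemma conv_qind_values:
  assumes "i < p"
  shows "conv p (qind p True) (qind p True) i =
           (if i = 0 then diag0 else if i \<in> qclass p True then cycR True True else cycR False False)"
    "conv p (qind p False) (qind p False) i =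
           (if i = 0 then diag0 else if i \<in> qclass p True then cycR False False else cycR True True)"
    "conv p (qind p True) (qind p False) i = (if i = 0 then offdiag0 else cycR True False)"
    "conv p (qind p False) (qind p True) i = (if i = 0 then offdiag0 else cycR True False)"
  using conv_qind[OF assms] pair_count_formula[OF assms] cyc_sym by auto

lemma cmul_qpoly:
  "cmul p (qpoly p a b c) (qpoly p a' b' c') =
    qpoly p (a*a' + (b*b' + c*c') * diag0 + (b*c' + c*b') * offdiag0)
      (a*b' + b*a' + b*b' * cycR True True + c*c' * cycR False False + (b*c' + c*b') * cycR True False)
      (a*c' + c*a' + b*b' * cycR False False + c*c' * cycR True True + (b*c' + c*b') * cycR True False)"
    (is "_ = ?rhs")
proof
  fix i
  show "cmul p (qpoly p a b c) (qpoly p a' b' c') i = ?rhs i"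
  proof (cases "i < p")
    case i: True
    have "conv p (qpoly p a b c) (qpoly p a' b' c') i =
       a * (a' * onepol i + b' * qind p True i + c' * qind p False i)
     + b * (a' * qind p True i + b' * conv p (qind p True) (qind p True) i + c' * conv p (qind p True) (qind p False) i)
     + c * (a' * qind p False i + b' * conv p (qind p False) (qind p True) i + c' * conv p (qind p False) (qind p False) i)"
      unfolding qpoly_def[abs_def] conv_linear_left conv_linear_right conv_one_left[OF i] conv_one_right[OF i]
      by simp
    also have "\<dots> = ?rhs i"
      using i unfolding conv_qind_values[OF i]
      by (cases rule: residue_cases) (use qpoly_values qclass_disj qclass_range in
          \<open>auto simp: qind_def onepol_def algebra_simps\<close>)
    finally show ?thesis using cmul_eq_conv[OF p0 i] by simp
  next
    case False thus ?thesis using qpoly_values(4) unfolding cmul_def by simp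
  qed
qed

lemma qpoly_reflect:
  assumes i: "i < p"
  shows "qpoly p a b c (modp p (- int i)) =
         qpoly p a (if minus_one_QR then b else c) (if minus_one_QR then c else b) i"
  using i
proof (cases rule: residue_cases)
  case 1 thus ?thesis using qpoly_values by (simp add: modp_def)
next
  case 2
  have ii: "0 < i" "i < p" using qclass_range[OF 2] by auto
  have "modp p (-1 * int i) \<in> qclass p minus_one_QR"
    using modp_mult_qclass[OF not_dvd_minus_one not_dvd_lt[OF ii]] 2 nat_qclass[OF p0 i] by simp
  thus ?thesis using 2 qpoly_values by (cases minus_one_QR) auto
next
  case 3
  have ii: "0 < i" "i < p" using qclass_range[OF 3] by auto
  have "modp p (-1 * int i) \<in> qclass p (\<not> minus_one_QR)"
    using modp_mult_qclass[OF not_dvd_minus_one not_dvd_lt[OF ii]] 3 nat_qclass[OF p0 i] by simp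
  thus ?thesis using 3 qpoly_values by (cases minus_one_QR) auto
qed

lemma sum_qpoly: "(\<Sum>i<p. qpoly p a b c i) = a + of_nat nres * b + of_nat nres * c"
proof -
  have "(\<Sum>i<p. qind p b i) = of_nat nres" for b
  proof -
    have "(\<Sum>i<p. qind p b i) = of_nat (\<Sum>i<p. if i \<in> qclass p b then (1::nat) else 0)"
      unfolding of_nat_sum qind_def by (intro sum.cong) auto
    also have "\<dots> = of_nat (card {i\<in>{..<p}. i \<in> qclass p b})"
      using card_filter_sum[of "{..<p}" "\<lambda>i. i \<in> qclass p b"] by simp
    also have "{i\<in>{..<p}. i \<in> qclass p b} = qclass p b" using qclass_sub by auto
    finally show ?thesis using card_qclass by simp
  qed
  moreover have "(\<Sum>i<p. onepol i) = 1" unfolding onepol_def using p0 by simp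
  ultimately show ?thesis unfolding qpoly_def by (simp add: sum.distrib sum_distrib_left[symmetric])
qed

lemma onepol_minus_qpoly:
  "i < p \<Longrightarrow> onepol i - qpoly p a b c i - d = qpoly p (1 - a - d) (- b - d) (- c - d) i"
  by (cases rule: residue_cases) (use qpoly_values qclass_range in \<open>auto simp: onepol_def\<close>)

end

definition border_row :: "nat \<Rightarrow> R \<Rightarrow> R \<Rightarrow> nat \<Rightarrow> R" where
  "border_row p x y = (\<lambda>j. if j = 0 then x else if j \<le> p then y else 0)"

definition shift_in :: "nat \<Rightarrow> (nat \<Rightarrow> R) \<Rightarrow> nat \<Rightarrow> R" where
  "shift_in p g = (\<lambda>j. if 0 < j \<and> j \<le> p then g (j - 1) else 0)"

definition ext_ideal :: "nat \<Rightarrow> R \<Rightarrow> R \<Rightarrow> (nat \<Rightarrow> R) \<Rightarrow> (nat \<Rightarrow> R) set" where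
  "ext_ideal p x y f = {(\<lambda>i. c * border_row p x y i + shift_in p (cmul p g f) i) | c g. g \<in> vecs p}"

lemma rspan_least:
  assumes zero: "(\<lambda>i. 0) \<in> T" and step: "\<And>u s d. u \<in> T \<Longrightarrow> s \<in> S \<Longrightarrow> (\<lambda>i. u i + d * s i) \<in> T"
  shows "rspan S \<subseteq> T"
proof
  fix v assume "v \<in> rspan S"
  then obtain k c w where v: "v = (\<lambda>i. \<Sum>j<(k::nat). c j * w j i)" and w: "\<forall>j<k. w j \<in> S"
    unfolding rspan_def by auto
  have "(\<lambda>i. \<Sum>j<n. c j * w j i) \<in> T" if "n \<le> k" for n
    using that
  proof (induction n)
    case 0 thus ?case using zero by simp
  next
    case (Suc n)
    hence "(\<lambda>i. (\<Sum>j<n. c j * w j i) + c n * w n i) \<in> T" using step w by simp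
    thus ?case by simp
  qed
  thus "v \<in> T" using v by simp
qed

lemma rspan_mem: "s \<in> S \<Longrightarrow> s \<in> rspan S"
  unfolding rspan_def by (rule CollectI, intro exI[of _ "1::nat"] exI[of _ "\<lambda>_. 1"] exI[of _ "\<lambda>_. s"]) simp

lemma cmul_add_left: "cmul p (\<lambda>i. g i + d * h i) f = (\<lambda>i. cmul p g f i + d * cmul p h f i)"
proof
  fix i
  have "(if b then (g j + d * h j) * f k else 0) = (if b then g j * f k else 0) + d * (if b then h j * f k else 0)"
    for b j k by (simp add: algebra_simps)
  thus "cmul p (\<lambda>i. g i + d * h i) f i = cmul p g f i + d * cmul p h f i"
    unfolding cmul_def by (simp add: sum.distrib sum_distrib_left)
qed

lemma cmul_zero_left: "cmul p (\<lambda>i. 0) f = (\<lambda>i. 0)"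
  unfolding cmul_def by (simp only: mult_zero_left if_cancel sum.neutral_const)

lemma ext_code_alt: "ext_code p x y G = rspan (insert (border_row p x y) (shift_in p ` set G))"
  unfolding ext_code_def border_row_def shift_in_def ..

text \<open>If the rows of G lie in (f), the extended code lies in ext_ideal, which is closed under
  adding multiples of the border row and of the rows (0 | g).\<close>
lemma ext_code_subset_ext_ideal:
  assumes G: "set G \<subseteq> cideal p f"
  shows "ext_code p x y G \<subseteq> ext_ideal p x y f"
  unfolding ext_code_alt
proof (rule rspan_least)
  show "(\<lambda>i. 0) \<in> ext_ideal p x y f" unfolding ext_ideal_def
    by (rule CollectI, rule exI[of _ 0], rule exI[of _ "\<lambda>i. 0"]) (auto simp: vecs_def cmul_zero_left shift_in_def)
next
  fix u s d assume u: "u \<in> ext_ideal p x y f" and s: "s \<in> insert (border_row p x y) (shift_in p ` set G)"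
  from u obtain c g where ug: "u = (\<lambda>i. c * border_row p x y i + shift_in p (cmul p g f) i)" "g \<in> vecs p"
    unfolding ext_ideal_def by blast
  show "(\<lambda>i. u i + d * s i) \<in> ext_ideal p x y f"
  proof (cases "s = border_row p x y")
    case True
    have "(\<lambda>i. u i + d * s i) = (\<lambda>i. (c + d) * border_row p x y i + shift_in p (cmul p g f) i)"
      unfolding ug True by (auto simp: algebra_simps)
    thus ?thesis unfolding ext_ideal_def using ug(2) by blast
  next
    case False
    then obtain w where w: "w \<in> set G" "s = shift_in p w" using s by auto
    then obtain h where h: "w = cmul p h f" "h \<in> vecs p" using G unfolding cideal_def by blast
    have "(\<lambda>i. u i + d * s i) = (\<lambda>i. c * border_row p x y i + shift_in p (cmul p (\<lambda>i. g i + d * h i) f) i)"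
      unfolding ug w h cmul_add_left by (auto simp: shift_in_def algebra_simps)
    moreover have "(\<lambda>i. g i + d * h i) \<in> vecs p" using ug(2) h(2) unfolding vecs_def by auto
    ultimately show ?thesis unfolding ext_ideal_def by blast
  qed
qed

lemma ext_ideal_subset_ext_code:
  assumes G: "cideal p f \<subseteq> rspan (set G)"
  shows "ext_ideal p x y f \<subseteq> ext_code p x y G"
proof
  fix u assume "u \<in> ext_ideal p x y f"
  then obtain c g where ug: "u = (\<lambda>i. c * border_row p x y i + shift_in p (cmul p g f) i)" "g \<in> vecs p"
    unfolding ext_ideal_def by blast
  have "cmul p g f \<in> rspan (set G)" using G ug(2) unfolding cideal_def by blast
  then obtain k d w where cw: "cmul p g f = (\<lambda>i. \<Sum>j<(k::nat). d j * w j i)" and w: "\<forall>j<k. w j \<in> set G"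
    unfolding rspan_def by auto
  define d' where "d' = (\<lambda>j. if j < k then d j else c)"
  define w' where "w' = (\<lambda>j. if j < k then shift_in p (w j) else border_row p x y)"
  have "u = (\<lambda>i. \<Sum>j<Suc k. d' j * w' j i)"
    unfolding ug cw d'_def w'_def by (auto simp: shift_in_def sum_distrib_left intro!: sum.cong)
  moreover have "\<forall>j<Suc k. w' j \<in> insert (border_row p x y) (shift_in p ` set G)"
    using w unfolding w'_def by auto
  ultimately show "u \<in> ext_code p x y G" unfolding ext_code_alt rspan_def by blast
qed

lemma ext_code_eq_ext_ideal:
  assumes "rspan (set G) = cideal p f"
  shows "ext_code p x y G = ext_ideal p x y f"
  using ext_code_subset_ext_ideal[of G p f] ext_ideal_subset_ext_code[of p f G] rspan_mem assms
  by blast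

section \<open>A duality criterion for extended cyclic codes\<close>

text \<open>The relation between the generators f and f' of a code and its dual: the reflection
  X to X^-1 maps f to 1 - f' - p J, where J is the all-one polynomial.\<close>
definition reflect_complement :: "nat \<Rightarrow> (nat \<Rightarrow> R) \<Rightarrow> (nat \<Rightarrow> R) \<Rightarrow> bool" where
  "reflect_complement p f f' \<longleftrightarrow> (\<forall>i<p. f (modp p (- int i)) = onepol i - f' i - of_nat p)"

lemma sum_lessThan_Suc_shift: "(\<Sum>i<p+1. F i) = F 0 + (\<Sum>m<p. F (Suc m))"
  unfolding Suc_eq_plus1[symmetric] by (rule sum.lessThan_Suc_shift)

definition tail_of :: "nat \<Rightarrow> (nat \<Rightarrow> R) \<Rightarrow> nat \<Rightarrow> R" where
  "tail_of p u = (\<lambda>m. if m < p then u (Suc m) else 0)"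

lemma sum_lessThan_Suc_tail:
  "(\<Sum>i<p+1. u i * w i) = u 0 * w 0 + (\<Sum>m<p. tail_of p u m * w (Suc m))"
  unfolding sum_lessThan_Suc_shift tail_of_def by simp

context odd_prime
begin

lemma sum_cmul: "(\<Sum>m<p. cmul p g f m) = (\<Sum>j<p. g j) * (\<Sum>m<p. f m)"
proof -
  have "(\<Sum>m<p. cmul p g f m) = (\<Sum>m<p. \<Sum>j<p. g j * f (modp p (int m - int j)))"
    using cmul_eq_conv[OF p0] unfolding conv_def by simp
  also have "\<dots> = (\<Sum>j<p. \<Sum>m<p. g j * f (modp p (1 * int m + - int j)))"
    by (subst sum.swap) simp
  also have "\<dots> = (\<Sum>j<p. g j * (\<Sum>m<p. f m))"
    by (simp only: sum_distrib_left[symmetric] affine_sum[OF prime coprime_1_left])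
  finally show ?thesis by (simp add: sum_distrib_right)
qed

lemma modp_shift_back: "m < p \<Longrightarrow> modp p (int (modp p (int m + int j)) - int j) = m"
proof -
  assume m: "m < p"
  have "[int (modp p (int m + int j)) - int j = int m] (mod int p)"
    using cong_diff[OF modp_cong_self[OF p0, of "int m + int j"] cong_refl[of "int j"]] by simp
  thus ?thesis using modp_cong modp_of_lt[OF m] by metis
qed

lemma modp_shift_reflect:
  "modp p (int (modp p (int m + int j)) - int k) =
   modp p (- int (modp p (int (modp p (int k - int j)) - int m)))"
proof (rule modp_cong)
  let ?d = "int (modp p (int k - int j))"
  have "[int (modp p (int m + int j)) - int k = int m + int j - int k] (mod int p)"
    using cong_diff[OF modp_cong_self[OF p0] cong_refl] .
  moreover have "[- int (modp p (?d - int m)) = - (?d - int m)] (mod int p)"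
    using modp_cong_self[OF p0] by (rule cong_minus_minus_iff[THEN iffD2])
  moreover have "[- (?d - int m) = - ((int k - int j) - int m)] (mod int p)"
    using cong_diff[OF modp_cong_self[OF p0] cong_refl] by (rule cong_minus_minus_iff[THEN iffD2])
  moreover have "int m + int j - int k = - ((int k - int j) - int m)" by simp
  ultimately show "[int (modp p (int m + int j)) - int k = - int (modp p (?d - int m))] (mod int p)"
    by (metis cong_sym cong_trans)
qed

text \<open>Inner products of cyclic shifts of f' and f vanish: the sum is a coefficient of
  f' (1 - f' - p J) = 0, using that f' is idempotent with coefficient sum 0.\<close>
lemma shifts_orthogonal:
  assumes rc: "reflect_complement p f f'"
    and idem: "cmul p f' f' = f'" and sum0: "(\<Sum>i<p. f' i) = 0"
  shows "(\<Sum>m<p. f' (modp p (int m - int j)) * f (modp p (int m - int k))) = 0"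
proof -
  define d where "d = modp p (int k - int j)"
  have dp: "d < p" unfolding d_def using modp_lt[OF p0] .
  let ?F = "\<lambda>m. f' (modp p (int m - int j)) * f (modp p (int m - int k))"
  have "(\<Sum>m<p. ?F m) = (\<Sum>m<p. ?F (modp p (1 * int m + int j)))"
    by (rule affine_sum[OF prime coprime_1_left, symmetric])
  also have "\<dots> = (\<Sum>m<p. f' m * (onepol (modp p (int d - int m)) - f' (modp p (int d - int m)) - of_nat p))"
  proof (rule sum.cong[OF refl])
    fix m assume "m \<in> {..<p}"
    hence m: "m < p" by simp
    note e1 = modp_shift_back[OF m] and e2 = modp_shift_reflect[of m j k, folded d_def]
    show "?F (modp p (1 * int m + int j)) =
        f' m * (onepol (modp p (int d - int m)) - f' (modp p (int d - int m)) - of_nat p)"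
      using e1 e2 rc modp_lt[OF p0] unfolding reflect_complement_def by simp
  qed
  also have "\<dots> = conv p f' onepol d - conv p f' f' d - of_nat p * (\<Sum>m<p. f' m)"
    unfolding conv_def by (simp add: algebra_simps sum_subtractf sum_distrib_left sum.distrib)
  also have "\<dots> = 0"
    using conv_one_right[OF dp] idem cmul_eq_conv[OF p0 dp, of f' f'] sum0 by simp
  finally show ?thesis .
qed

lemma ideals_orthogonal:
  assumes rc: "reflect_complement p f f'"
    and idem: "cmul p f' f' = f'" and sum0: "(\<Sum>i<p. f' i) = 0"
  shows "(\<Sum>m<p. cmul p g' f' m * cmul p g f m) = 0"
proof -
  have "(\<Sum>m<p. cmul p g' f' m * cmul p g f m) =
      (\<Sum>m<p. (\<Sum>j<p. g' j * f' (modp p (int m - int j))) * (\<Sum>k<p. g k * f (modp p (int m - int k))))"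
    using cmul_eq_conv[OF p0] unfolding conv_def by simp
  also have "\<dots> = (\<Sum>m<p. \<Sum>j<p. \<Sum>k<p. (g' j * g k) * (f' (modp p (int m - int j)) * f (modp p (int m - int k))))"
    unfolding sum_product by (intro sum.cong refl) (simp add: algebra_simps)
  also have "\<dots> = (\<Sum>j<p. \<Sum>m<p. \<Sum>k<p. (g' j * g k) * (f' (modp p (int m - int j)) * f (modp p (int m - int k))))"
    by (rule sum.swap)
  also have "\<dots> = (\<Sum>j<p. \<Sum>k<p. \<Sum>m<p. (g' j * g k) * (f' (modp p (int m - int j)) * f (modp p (int m - int k))))"
    by (rule sum.cong[OF refl], rule sum.swap)
  also have "\<dots> = 0"
    by (simp add: sum_distrib_left[symmetric] shifts_orthogonal[OF rc idem sum0])
  finally show ?thesis .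
qed

lemma ext_ideal_orthogonal:
  assumes rc: "reflect_complement p f f'" and idem: "cmul p f' f' = f'"
    and sum0: "(\<Sum>i<p. f i) = 0" "(\<Sum>i<p. f' i) = 0"
    and border: "x*x' + of_nat p*(y*y') = 0"
  shows "ext_ideal p x' y' f' \<subseteq> edual (p+1) (ext_ideal p x y f)"
proof
  fix u assume "u \<in> ext_ideal p x' y' f'"
  then obtain c' g' where u: "u = (\<lambda>i. c' * border_row p x' y' i + shift_in p (cmul p g' f') i)"
    unfolding ext_ideal_def by blast
  have "(\<Sum>i<p+1. u i * w i) = 0" if w_mem: "w \<in> ext_ideal p x y f" for w
  proof -
    obtain c g where w: "w = (\<lambda>i. c * border_row p x y i + shift_in p (cmul p g f) i)"
      using w_mem unfolding ext_ideal_def by blast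
    let ?h = "cmul p g f" and ?h' = "cmul p g' f'"
    have sh: "(\<Sum>m<p. ?h m) = 0" "(\<Sum>m<p. ?h' m) = 0" using sum_cmul sum0 by simp_all
    have "(\<Sum>i<p+1. u i * w i) = c' * x' * (c * x) + (\<Sum>m<p. (c' * y' + ?h' m) * (c * y + ?h m))"
      unfolding sum_lessThan_Suc_shift u w by (simp add: border_row_def shift_in_def)
    also have "(\<Sum>m<p. (c' * y' + ?h' m) * (c * y + ?h m)) =
        of_nat p * (c' * y' * (c * y)) + c' * y' * (\<Sum>m<p. ?h m) + c * y * (\<Sum>m<p. ?h' m) + (\<Sum>m<p. ?h' m * ?h m)"
      by (simp add: algebra_simps sum.distrib sum_distrib_left)
    finally have "(\<Sum>i<p+1. u i * w i) = c' * c * (x * x' + of_nat p * (y * y'))"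
      using sh ideals_orthogonal[OF rc idem sum0(2)] by (simp add: algebra_simps)
    thus ?thesis using border by simp
  qed
  moreover have "u \<in> vecs (p+1)" unfolding u vecs_def border_row_def shift_in_def by auto
  ultimately show "u \<in> edual (p+1) (ext_ideal p x y f)" unfolding edual_def by blast
qed

text \<open>Orthogonality of a word u to the words (0 | e_s f) forces the tail a of u to satisfy
  a = a f' + p (sum of a) coordinatewise.\<close>
lemma orthogonal_shifts_tail:
  assumes rc: "reflect_complement p f f'" and s: "s < p"
    and orth: "(\<Sum>m<p. a m * f (modp p (int m - int s))) = 0"
  shows "a s = cmul p a f' s + of_nat p * (\<Sum>m<p. a m)"
proof -
  have fm: "f (modp p (int m - int s)) =
      onepol (modp p (int s - int m)) - f' (modp p (int s - int m)) - of_nat p" for m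
  proof -
    have "modp p (int m - int s) = modp p (- int (modp p (int s - int m)))"
      by (rule modp_cong) (simp add: int_modp[OF p0] cong_def mod_minus_eq)
    thus ?thesis using rc modp_lt[OF p0] unfolding reflect_complement_def by simp
  qed
  have "(\<Sum>m<p. a m * f (modp p (int m - int s))) = conv p a onepol s - conv p a f' s - of_nat p * (\<Sum>m<p. a m)"
    unfolding fm conv_def by (simp add: algebra_simps sum_subtractf sum_distrib_left sum.distrib)
  thus ?thesis using orth conv_one_right[OF s] cmul_eq_conv[OF p0 s, of a f'] by (simp add: algebra_simps)
qed

text \<open>A word of the dual is determined by two equations: orthogonality to the border row fixes
  its first entry, orthogonality to the words (0 | e_s f) gives the fixed-point equation above
  for its last p entries.\<close>
lemma edual_ext_ideal_equations:
  assumes rc: "reflect_complement p f f'" and u: "u \<in> edual (p+1) (ext_ideal p x y f)"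
  shows "u 0 * x = - ((\<Sum>m<p. tail_of p u m) * y)"
    and "s < p \<Longrightarrow> tail_of p u s = cmul p (tail_of p u) f' s + of_nat p * (\<Sum>m<p. tail_of p u m)"
proof -
  have uo: "(\<Sum>m<p. tail_of p u m * w (Suc m)) = - (u 0 * w 0)" if "w \<in> ext_ideal p x y f" for w
    using u that sum_lessThan_Suc_tail[of u w p] unfolding edual_def by (simp add: eq_neg_iff_add_eq_0 add.commute)
  have "(\<lambda>i. 1 * border_row p x y i + shift_in p (cmul p (\<lambda>i. 0) f) i) \<in> ext_ideal p x y f"
    unfolding ext_ideal_def by (rule CollectI, intro exI[of _ 1] exI[of _ "\<lambda>i. 0"]) (simp add: vecs_def)
  from uo[OF this] show "u 0 * x = - ((\<Sum>m<p. tail_of p u m) * y)"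
    by (simp add: border_row_def shift_in_def cmul_zero_left sum_distrib_right)
  assume s: "s < p"
  define e where "e = (\<lambda>j. if j = s then (1::R) else 0)"
  have "cmul p e f m = f (modp p (int m - int s))" if "m < p" for m
  proof -
    have "(\<Sum>j<p. e j * f (modp p (int m - int j))) = (\<Sum>j<p. if j = s then f (modp p (int m - int j)) else 0)"
      unfolding e_def by (intro sum.cong) auto
    thus ?thesis using cmul_eq_conv[OF p0 that, of e f] s unfolding conv_def by simp
  qed
  moreover have "(\<lambda>i. 0 * border_row p x y i + shift_in p (cmul p e f) i) \<in> ext_ideal p x y f"
    unfolding ext_ideal_def using s by (intro CollectI exI[of _ 0] exI[of _ e]) (simp add: e_def vecs_def)
  from uo[OF this] have "(\<Sum>m<p. tail_of p u m * cmul p e f m) = 0"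
    by (simp add: shift_in_def)
  ultimately have "(\<Sum>m<p. tail_of p u m * f (modp p (int m - int s))) = 0" by simp
  thus "tail_of p u s = cmul p (tail_of p u) f' s + of_nat p * (\<Sum>m<p. tail_of p u m)"
    by (rule orthogonal_shifts_tail[OF rc s])
qed

text \<open>Conversely the dual of the extension of (f) lies in the extension of (f'): a dual word
  is c' (x', y', ..., y') + (0 | a f') with a its tail and c' = y' p (sum of a).\<close>
lemma edual_ext_ideal_subset:
  assumes rc: "reflect_complement p f f'"
    and border: "x*x = 1" "y'*y' = 1" "-(x*y) = x'*y'*of_nat p"
  shows "edual (p+1) (ext_ideal p x y f) \<subseteq> ext_ideal p x' y' f'"
proof
  fix u assume u: "u \<in> edual (p+1) (ext_ideal p x y f)"
  let ?a = "tail_of p u"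
  define S where "S = (\<Sum>m<p. ?a m)"
  note first = edual_ext_ideal_equations(1)[OF rc u, folded S_def]
  note tail = edual_ext_ideal_equations(2)[OF rc u, folded S_def]
  define c' where "c' = y' * of_nat p * S"
  have "u = (\<lambda>i. c' * border_row p x' y' i + shift_in p (cmul p ?a f') i)"
  proof
    fix i
    consider "i = 0" | m where "i = Suc m" "m < p" | "p < i" by (cases i; cases "i \<le> p") auto
    thus "u i = c' * border_row p x' y' i + shift_in p (cmul p ?a f') i"
    proof cases
      case 1
      have "u 0 = (u 0 * x) * x" using border(1) by (simp add: mult.assoc)
      also have "\<dots> = S * (- (x * y))" unfolding first by (simp add: algebra_simps)
      also have "\<dots> = c' * x'" unfolding border(3) c'_def by (simp add: algebra_simps)
      finally show ?thesis using 1 by (simp add: border_row_def shift_in_def)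
    next
      case (2 m)
      have "u i = ?a m" unfolding 2 tail_of_def using 2(2) by simp
      also have "\<dots> = cmul p ?a f' m + (y' * y') * (of_nat p * S)" using tail[OF 2(2)] border(2) by simp
      finally show ?thesis using 2 unfolding c'_def by (simp add: border_row_def shift_in_def algebra_simps)
    next
      case 3
      thus ?thesis using u unfolding edual_def vecs_def by (simp add: border_row_def shift_in_def)
    qed
  qed
  moreover have "?a \<in> vecs p" unfolding tail_of_def vecs_def by auto
  ultimately show "u \<in> ext_ideal p x' y' f'" unfolding ext_ideal_def by blast
qed

definition dual_generators :: "(nat \<Rightarrow> R) \<Rightarrow> (nat \<Rightarrow> R) \<Rightarrow> bool" where
  "dual_generators f f' \<longleftrightarrow> reflect_complement p f f' \<and> cmul p f' f' = f' \<and>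
     (\<Sum>i<p. f i) = 0 \<and> (\<Sum>i<p. f' i) = 0"

theorem edual_ext_ideal:
  assumes "dual_generators f f'"
    and border: "x*x = 1" "y'*y' = 1" "-(x*y) = x'*y'*of_nat p" "x*x' + of_nat p*(y*y') = 0"
  shows "edual (p+1) (ext_ideal p x y f) = ext_ideal p x' y' f'"
  using assms edual_ext_ideal_subset[OF _ border(1-3)] ext_ideal_orthogonal[OF _ _ _ _ border(4)]
  unfolding dual_generators_def by blast

end

lemma of_nat_R: "(of_nat n :: R) = RR (of_nat n) 0"
  by (induction n) (simp_all add: zero_R_def one_R_def)

lemma numeral_R: "(numeral n :: R) = RR (numeral n) 0"
  using of_nat_R[of "numeral n"] by simp

lemma four_eq_zero: "(4::4) = 0" "(-4::4) = 0" by simp_all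

lemma of_nat_mult_4: "(of_nat (4 * n) :: R) = 0"
  unfolding of_nat_R by (simp add: zero_R_def four_eq_zero)

lemma of_nat_mult_2: "(of_nat (2 * r) :: R) = (if odd r then 2 else 0)"
proof (cases "odd r")
  case True
  then obtain m where "r = 2 * m + 1" by (metis oddE)
  hence "2 * r = 4 * m + 2" by simp
  thus ?thesis using True of_nat_mult_4[of m] by simp
next
  case False
  then obtain m where "r = 2 * m" by (metis evenE)
  hence "2 * r = 4 * m" by simp
  thus ?thesis using False of_nat_mult_4[of m] by simp
qed

lemma two_minus_one_R: "(2::R) - 1 = 1"
  by (simp add: numeral_R one_R_def)

lemmas bool_simps = if_True if_False not_False_eq_True not_True_eq_False

lemmas R_eval = vR_def numeral_R one_R_def zero_R_def four_eq_zero of_nat_R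

context odd_prime
begin

text \<open>For p = -1 mod 8 the counting relations of the cyclotomic numbers, read modulo 4.\<close>
lemma params_mod7:
  assumes h: "p mod 8 = 7"
  shows "\<not> minus_one_QR" "(of_nat p :: R) = -1" "(of_nat nres :: R) = -1"
    "cycR True True = (if odd (qr_r p) then 1 else -1)" "cycR True False = (if odd (qr_r p) then 1 else -1)"
    "cycR False False = (if odd (qr_r p) then 2 else 0)"
proof -
  define r where "r = qr_r p"
  have pr: "p + 1 = 8 * r" unfolding r_def qr_r_def using h by (simp, presburger)
  have k4: "nres + 1 = 4 * r" using pr p_eq by linarith
  show nq: "\<not> minus_one_QR" using QuadRes_minus_one[OF prime gt2] h by presburger
  have "(of_nat (p + 1) :: R) = 0" unfolding pr using of_nat_mult_4[of "2*r"] by (simp add: mult.assoc)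
  thus "(of_nat p :: R) = -1" by (simp add: eq_neg_iff_add_eq_0 add.commute)
  have "(of_nat (nres + 1) :: R) = 0" unfolding k4 by (rule of_nat_mult_4)
  thus "(of_nat nres :: R) = -1" by (simp add: eq_neg_iff_add_eq_0 add.commute)
  have cyc: "cyc True True + cyc True False + 1 = nres" "cyc True False + cyc False False = nres"
    "2 * cyc True False + 1 = nres"
    using cyc_solution nq by auto
  have y1: "cyc True False + 1 = 2 * r" using cyc k4 by linarith
  have "cycR True False = of_nat (2 * r) - 1" unfolding y1[symmetric] by simp
  thus "cycR True False = (if odd (qr_r p) then 1 else -1)"
    unfolding of_nat_mult_2 r_def using two_minus_one_R by simp
  moreover have "cyc True True = cyc True False" using cyc by linarith
  ultimately show "cycR True True = (if odd (qr_r p) then 1 else -1)" by simp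
  have "cyc False False = 2 * r" using cyc k4 by linarith
  thus "cycR False False = (if odd (qr_r p) then 2 else 0)" using of_nat_mult_2 r_def by simp
qed

lemma params_mod1:
  assumes h: "p mod 8 = 1"
  shows "minus_one_QR" "(of_nat p :: R) = 1" "(of_nat nres :: R) = 0"
    "cycR True True = (if odd (qr_r p) then 1 else -1)" "cycR True False = (if odd (qr_r p) then 2 else 0)"
    "cycR False False = (if odd (qr_r p) then 2 else 0)"
proof -
  define r where "r = qr_r p"
  have pr: "p = 8 * r + 1" unfolding r_def qr_r_def using h by (simp, presburger)
  have k4: "nres = 4 * r" using pr by simp
  show q: "minus_one_QR" using QuadRes_minus_one[OF prime gt2] h by presburger
  show "(of_nat p :: R) = 1" unfolding pr using of_nat_mult_4[of "2*r"] by (simp add: mult.assoc)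
  show "(of_nat nres :: R) = 0" unfolding k4 by (rule of_nat_mult_4)
  have cyc: "cyc True True + cyc True False + 1 = nres" "cyc True False + cyc False False = nres"
    "2 * cyc True False = nres"
    using cyc_solution q by auto
  have "cyc True False = 2 * r" using cyc k4 by linarith
  thus "cycR True False = (if odd (qr_r p) then 2 else 0)" using of_nat_mult_2 r_def by simp
  have "cyc False False = 2 * r" using cyc k4 by linarith
  thus "cycR False False = (if odd (qr_r p) then 2 else 0)" using of_nat_mult_2 r_def by simp
  have x1: "cyc True True + 1 = 2 * r" using cyc k4 by linarith
  have "cycR True True = of_nat (2 * r) - 1" unfolding x1[symmetric] by simp
  thus "cycR True True = (if odd (qr_r p) then 1 else -1)"
    unfolding of_nat_mult_2 r_def using two_minus_one_R by simp
qed

section \<open>The generators of E_1 and E_2 as dual pairs\<close>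

lemma qpoly_dual_generators:
  assumes reflect: "a = 1 - a' - of_nat p"
      "(if minus_one_QR then b else c) = - b' - of_nat p" "(if minus_one_QR then c else b) = - c' - of_nat p"
    and idem: "a'*a' + (b'*b' + c'*c') * diag0 + (b'*c' + c'*b') * offdiag0 = a'"
      "a'*b' + b'*a' + b'*b' * cycR True True + c'*c' * cycR False False + (b'*c' + c'*b') * cycR True False = b'"
      "a'*c' + c'*a' + b'*b' * cycR False False + c'*c' * cycR True True + (b'*c' + c'*b') * cycR True False = c'"
    and sums: "a + of_nat nres * b + of_nat nres * c = 0" "a' + of_nat nres * b' + of_nat nres * c' = 0"
  shows "dual_generators (qpoly p a b c) (qpoly p a' b' c')"
proof -
  have "qpoly p a b c (modp p (- int i)) = onepol i - qpoly p a' b' c' i - of_nat p" if i: "i < p" for i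
  proof -
    have "qpoly p a b c (modp p (- int i)) =
        qpoly p a (if minus_one_QR then b else c) (if minus_one_QR then c else b) i"
      by (rule qpoly_reflect[OF i])
    also have "\<dots> = qpoly p (1 - a' - of_nat p) (- b' - of_nat p) (- c' - of_nat p) i"
      using reflect by simp
    finally show ?thesis using onepol_minus_qpoly[OF i] by simp
  qed
  moreover have "cmul p (qpoly p a' b' c') (qpoly p a' b' c') = qpoly p a' b' c'"
    unfolding cmul_qpoly idem ..
  ultimately show ?thesis using sums sum_qpoly unfolding dual_generators_def reflect_complement_def by simp
qed

lemma Egen_mod7:
  assumes h: "p mod 8 = 7"
  shows "Egen p 1 = (if odd (qr_r p) then vcomb (qpoly p 1 2 (-1)) (qpoly p 1 (-1) 2)
                     else vcomb (qpoly p 1 0 1) (qpoly p 1 1 0))"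
    "Egen p 2 = (if odd (qr_r p) then vcomb (qpoly p 1 (-1) 2) (qpoly p 1 2 (-1))
                     else vcomb (qpoly p 1 1 0) (qpoly p 1 0 1))"
  unfolding Egen_def Let_def generators_qpoly using h by simp_all

lemma Egen_mod1:
  assumes h: "p mod 8 = 1"
  shows "Egen p 1 = (if odd (qr_r p) then vcomb (qpoly p 0 1 2) (qpoly p 0 2 1)
                     else vcomb (qpoly p 0 (-1) 0) (qpoly p 0 0 (-1)))"
    "Egen p 2 = (if odd (qr_r p) then vcomb (qpoly p 0 2 1) (qpoly p 0 1 2)
                     else vcomb (qpoly p 0 0 (-1)) (qpoly p 0 (-1) 0))"
  unfolding Egen_def Let_def generators_qpoly using h by simp_all

text \<open>Once the generator is
  written as a + b Q + c N and the parameters are known, the hypotheses of the criterion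
  are identities between closed expressions in R.\<close>
lemma Egen_dual_mod7:
  assumes h: "p mod 8 = 7" and i: "i = 1 \<or> i = 2"
  shows "dual_generators (Egen p i) (Egen p i)"
proof -
  have parity: "odd (qr_r p) \<or> even (qr_r p)" by blast
  show ?thesis
    by (insert i parity)
       (elim disjE; simp only: Egen_mod7[OF h] vcomb_qpoly bool_simps;
        rule qpoly_dual_generators; simp only: params_mod7[OF h] bool_simps; simp add: R_eval)
qed

lemma Egen_dual_mod1:
  assumes h: "p mod 8 = 1" and ij: "(i = 1 \<and> j = 2) \<or> (i = 2 \<and> j = 1)"
  shows "dual_generators (Egen p i) (Egen p j)"
proof -
  have parity: "odd (qr_r p) \<or> even (qr_r p)" by blast
  show ?thesis
    by (insert ij parity)
       (elim disjE conjE; simp only: Egen_mod1[OF h] vcomb_qpoly bool_simps;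
        rule qpoly_dual_generators; simp only: params_mod1[OF h] bool_simps; simp add: R_eval)
qed

text \<open>Part (i): for p = -1 mod 8 both extensions, with border (3, 3) and (1, 3), are
  self-dual; the border identities hold because p = -1 and 3^2 = 1 in R.\<close>
lemma ext_Egen_self_dual_mod7:
  assumes h: "p mod 8 = 7" and x: "x = 3 \<or> x = 1" and i: "i = 1 \<or> i = 2"
  shows "self_dual (p + 1) (ext_ideal p x 3 (Egen p i))"
proof -
  have "x*x = 1" "(3::R)*3 = 1" "-(x*3) = x*3*of_nat p" "x*x + of_nat p*(3*3) = 0"
    unfolding params_mod7(2)[OF h] using x by (auto simp: R_eval)
  thus ?thesis unfolding self_dual_def by (intro edual_ext_ideal[OF Egen_dual_mod7[OF h i], symmetric])
qed

lemma ext_Egen_dual_mod1: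
  assumes h: "p mod 8 = 1" and ij: "(i = 1 \<and> j = 2) \<or> (i = 2 \<and> j = 1)"
  shows "edual (p+1) (ext_ideal p 3 1 (Egen p i)) = ext_ideal p 1 1 (Egen p j)"
proof -
  have "(3::R)*3 = 1" "(1::R)*1 = 1" "-(3*1) = 1*1*(of_nat p :: R)" "3*1 + of_nat p*(1*1) = (0::R)"
    unfolding params_mod1(2)[OF h] by (simp_all add: R_eval)
  thus ?thesis by (intro edual_ext_ideal[OF Egen_dual_mod1[OF h ij]])
qed

end

theorem theorem20:
  fixes p :: nat and G1 G2 :: "(nat \<Rightarrow> R) list"
  assumes "prime p" and "p mod 8 = 1 \<or> p mod 8 = 7"
    and "rspan (set G1) = Ecode p 1" and "rspan (set G2) = Ecode p 2"
  shows "(p mod 8 = 7 \<longrightarrow>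
            self_dual (p + 1) (hatD p G1) \<and> self_dual (p + 1) (tildeD p G1) \<and>
            self_dual (p + 1) (hatD p G2) \<and> self_dual (p + 1) (tildeD p G2))
       \<and> (p mod 8 = 1 \<longrightarrow>
            edual (p + 1) (hatD p G1) = tildeD p G2 \<and>
            edual (p + 1) (hatD p G2) = tildeD p G1)"
proof -
  have "2 < p" using assms(1,2) prime_ge_2_nat[OF assms(1)] by (cases "p = 2") auto
  then interpret odd_prime p by unfold_locales (rule assms(1))
  have ext1: "ext_code p x y G1 = ext_ideal p x y (Egen p 1)"
    and ext2: "ext_code p x y G2 = ext_ideal p x y (Egen p 2)" for x y
    using ext_code_eq_ext_ideal assms(3,4) unfolding Ecode_def by blast+
  show ?thesis
    unfolding hatD_def tildeD_def ext1 ext2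
    using ext_Egen_self_dual_mod7 ext_Egen_dual_mod1 by simp
qed

end
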